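(* Let $\ell\ge2$, let $\mathcal R$ be an $\ell$-vertex rule with associated graphs $(G(m))_{m\ge0}$ on $[n]$, and fix $0<\alpha\le1$, $D>0$ and an integer $B\ge2$. Let $\mathcal L(\alpha,B,D)$ denote the event that for all integers $0\le m\le n^2$ and \[1\le k\le \min\Bigl\{\frac{\alpha^2e^{-4\ell BD}}{8\ell^2B^2D}\frac{n}{\log n},\ \frac{n}{2B}\Bigr\}\] the following holds: if $M_k^B(m)\ge\alpha n$, then $M_k^B(m+\Delta)>\frac{\alpha}{2B}e^{-2\ell BD}n$ for every integer $0\le\Delta\le D\frac nk$. Then $\Pr(\mathcal L(\alpha,B,D))\ge1-n^{-1}$.
   Context: $\ell$-vertex rule: fix an integer $\ell\ge2$. For each $n$, let $(\underline v_1,\underline v_2,\dots)$ be an i.i.d. sequence, where each $\underline v_m=(v_{m,1},\dots,v_{m,\ell})$ consists of $\ell$ vertices of $[n]$ chosen independently and uniformly at random. There is a filtration $\mathcal F_0\subseteq\mathcal F_1\subseteq\cdots$ such that $\underline v_m$ is $\mathcal F_m$-measurable and independent of $\mathcal F_{m-1}$. An $\ell$-vertex rule is a random sequence of graphs $(G(m))_{m\ge0}$ on $[n]$ such that: (i) $G(0)$ is empty; (ii) for $m\ge1$, $G(m)=G(m-1)\cup E_m$ where $E_m$ is a (possibly empty) $\mathcal F_m$-measurable set of edges each joining two vertices of $\underline v_m$; (iii) if the $\ell$ vertices of $\underline v_m$ lie in $\ell$ distinct components of $G(m-1)$, then $E_m\ne\varnothing$. Notation: $N_{\ge k}(m)$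 is the number of vertices of $G(m)$ in components with at least $k$ vertices, and $M_k^B(m)=N_{\ge k}(m)-N_{\ge Bk}(m)$ is the number of vertices in components with between $k$ and $Bk-1$ vertices; $\log$ is the natural logarithm. *)

theory Defs
  imports "HOL-Probability.Probability"
begin

definition vertex_tuples :: "nat \<Rightarrow> nat \<Rightarrow> nat list set" where
  "vertex_tuples n l = {xs. length xs = l \<and> set xs \<subseteq> {1..n}}"

text \<open>A graph is given by its edge set: a set of 2-element vertex sets.\<close>
definition edge_rel :: "nat set set \<Rightarrow> (nat \<times> nat) set" where
  "edge_rel G = {(a, b). {a, b} \<in> G}"

definition comp :: "nat \<Rightarrow> nat set set \<Rightarrow> nat \<Rightarrow> nat set" where
  "comp n G v = {u \<in> {1..n}. (v, u) \<in> (edge_rel G)\<^sup>*}"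

definition graph_at :: "(nat \<Rightarrow> 'a \<Rightarrow> nat set set) \<Rightarrow> nat \<Rightarrow> 'a \<Rightarrow> nat set set" where
  "graph_at E m \<omega> = (\<Union>i\<in>{1..m}. E i \<omega>)"

definition N_ge :: "nat \<Rightarrow> nat set set \<Rightarrow> nat \<Rightarrow> nat" where
  "N_ge n G k = card {u \<in> {1..n}. k \<le> card (comp n G u)}"

definition M_kB :: "nat \<Rightarrow> nat set set \<Rightarrow> nat \<Rightarrow> nat \<Rightarrow> int" where
  "M_kB n G k B = int (N_ge n G k) - int (N_ge n G (B * k))"

text \<open>l-vertex rule on [n]: probability space M, filtration F, the random tuples v m
  (m >= 1) and the added edge sets E m (m >= 1).  v m is F m-measurable, uniform on
  [n]^l and independent of F (m-1) (stated explicitly for this discrete variable).\<close>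
definition ell_vertex_rule ::
  "'a measure \<Rightarrow> (nat \<Rightarrow> 'a measure) \<Rightarrow> nat \<Rightarrow> nat \<Rightarrow> (nat \<Rightarrow> 'a \<Rightarrow> nat list)
     \<Rightarrow> (nat \<Rightarrow> 'a \<Rightarrow> nat set set) \<Rightarrow> bool" where
  "ell_vertex_rule M F n l v E \<longleftrightarrow>
     prob_space M \<and>
     (\<forall>m. sets (F m) \<subseteq> sets M \<and> space (F m) = space M) \<and>
     (\<forall>i j. i \<le> j \<longrightarrow> sets (F i) \<subseteq> sets (F j)) \<and>
     (\<forall>m\<ge>1. v m \<in> measurable (F m) (count_space UNIV) \<and>
        (\<forall>\<omega>\<in>space M. v m \<omega> \<in> vertex_tuples n l) \<and>
        (\<forall>A\<in>sets (F (m - 1)). \<forall>xs\<in>vertex_tuples n l.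
            measure M (A \<inter> {\<omega> \<in> space M. v m \<omega> = xs}) = measure M A / real n ^ l)) \<and>
     (\<forall>m\<ge>1. E m \<in> measurable (F m) (count_space UNIV) \<and>
        (\<forall>\<omega>\<in>space M. E m \<omega> \<subseteq> {{a, b} | a b. a \<in> set (v m \<omega>) \<and> b \<in> set (v m \<omega>) \<and> a \<noteq> b}) \<and>
        (\<forall>\<omega>\<in>space M.
           (\<forall>i<l. \<forall>j<l. i \<noteq> j \<longrightarrow>
              comp n (graph_at E (m - 1) \<omega>) (v m \<omega> ! i) \<noteq> comp n (graph_at E (m - 1) \<omega>) (v m \<omega> ! j))
           \<longrightarrow> E m \<omega> \<noteq> {}))"

end

theory Submission
  imports Defs
begin

text \<open>Fix \<open>m\<close> and \<open>k\<close> and condition on \<open>G(m)\<close>. The tuples chosen in the next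
  \<open>T = \<lfloor>D n / k\<rfloor>\<close> steps are independent and uniform, and a vertex whose component has between
  \<open>k\<close> and \<open>B k - 1\<close> vertices keeps its component up to time \<open>m + T\<close> unless one of the chosen
  vertices lies in it.  Each such component is missed by all \<open>l T\<close> chosen vertices with
  probability at least \<open>exp (- 2 l B D)\<close>, so if \<open>M\<^sub>k\<^sup>B(m) \<ge> \<alpha> n\<close> the expected number of untouched
  vertices is at least \<open>\<alpha> n exp (- 2 l B D)\<close>, at least four times the threshold.  Changing one
  tuple changes that number by at most \<open>l B k\<close>, so by McDiarmid's inequality it falls to the
  threshold with probability at most \<open>n\<^sup>-\<^sup>5\<close>; a union bound over the at most \<open>n\<^sup>4\<close> pairs
  \<open>(m, k)\<close> finishes the proof.\<close>

section \<open>McDiarmid's inequality for uniform lists\<close>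

lemma Hoeffdings_lemma_pmf_of_set:
  fixes X :: "'b set" and g :: "'b \<Rightarrow> real"
  assumes fin: "finite X" and ne: "X \<noteq> {}" and bnd: "\<And>x. x \<in> X \<Longrightarrow> a \<le> g x \<and> g x \<le> b"
    and l: "l > 0"
  shows "(\<Sum>x\<in>X. exp (l * (g x - (\<Sum>y\<in>X. g y) / card X))) \<le> card X * exp (l\<^sup>2 * (b - a)\<^sup>2 / 8)"
proof -
  interpret interval_bounded_random_variable "measure_pmf (pmf_of_set X)" g a b
    by unfold_locales (use fin ne bnd in \<open>auto simp: AE_measure_pmf_iff\<close>)
  define S where "S = (\<Sum>x\<in>X. exp (l * (g x - (\<Sum>y\<in>X. g y) / card X)))"
  have "nn_integral (measure_pmf (pmf_of_set X)) (\<lambda>x. exp (l * (g x - (\<integral>y. g y \<partial>measure_pmf (pmf_of_set X)))))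
          \<le> ennreal (exp (l\<^sup>2 * (b - a)\<^sup>2 / 8))"
    by (rule Hoeffdings_lemma_nn_integral) (rule l)
  also have "(\<integral>y. g y \<partial>measure_pmf (pmf_of_set X)) = (\<Sum>y\<in>X. g y) / card X"
    using fin ne by (simp add: integral_pmf_of_set)
  also have "nn_integral (measure_pmf (pmf_of_set X)) (\<lambda>x. exp (l * (g x - (\<Sum>y\<in>X. g y) / card X)))
               = ennreal (S / card X)"
    using fin ne unfolding S_def
    by (simp add: nn_integral_pmf_of_set ennreal_of_nat_eq_real_of_nat
        divide_ennreal[symmetric] sum_nonneg card_gt_0_iff)
  finally have "S / card X \<le> exp (l\<^sup>2 * (b - a)\<^sup>2 / 8)"
    by (subst (asm) ennreal_le_iff) auto
  thus ?thesis using fin ne by (simp add: S_def field_simps card_gt_0_iff)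
qed

definition lists_of_length :: "'b set \<Rightarrow> nat \<Rightarrow> 'b list set" where
  "lists_of_length X N = {xs. set xs \<subseteq> X \<and> length xs = N}"

lemma finite_lists_of_length: "finite X \<Longrightarrow> finite (lists_of_length X N)"
  unfolding lists_of_length_def by (rule finite_lists_length_eq)

lemma card_lists_of_length: "finite X \<Longrightarrow> card (lists_of_length X N) = card X ^ N"
  unfolding lists_of_length_def by (rule card_lists_length_eq)

lemma lists_of_length_0 [simp]: "lists_of_length X 0 = {[]}"
  unfolding lists_of_length_def by auto

lemma sum_lists_of_length_Suc:
  fixes \<phi> :: "'b list \<Rightarrow> 'c::comm_monoid_add"
  assumes "finite X"
  shows "(\<Sum>ys\<in>lists_of_length X (Suc N). \<phi> ys) = (\<Sum>x\<in>X. \<Sum>xs\<in>lists_of_length X N. \<phi> (x # xs))"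
proof -
  have img: "lists_of_length X (Suc N) = (\<lambda>p. snd p # fst p) ` (lists_of_length X N \<times> X)"
    using lists_length_Suc_eq[of X N] unfolding lists_of_length_def by (simp add: case_prod_beta)
  have inj: "inj_on (\<lambda>p. snd p # fst p) (lists_of_length X N \<times> X)"
    by (auto simp: inj_on_def)
  have "(\<Sum>ys\<in>lists_of_length X (Suc N). \<phi> ys) = (\<Sum>p\<in>lists_of_length X N \<times> X. \<phi> (snd p # fst p))"
    unfolding img sum.reindex[OF inj] by simp
  also have "\<dots> = (\<Sum>xs\<in>lists_of_length X N. \<Sum>x\<in>X. \<phi> (x # xs))"
    by (simp add: sum.cartesian_product case_prod_beta)
  also have "\<dots> = (\<Sum>x\<in>X. \<Sum>xs\<in>lists_of_length X N. \<phi> (x # xs))"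
    by (rule sum.swap)
  finally show ?thesis .
qed

text \<open>Expectations over a uniformly random list are written as sums over all lists.  The induction
  peels off the first entry: conditional on it, the induction hypothesis applies to the rest, and
  the conditional mean varies by at most \<open>c\<close> in the first entry, so Hoeffding's lemma applies to it.\<close>
lemma mcdiarmid_mgf_lists_of_length:
  fixes X :: "'b set" and f :: "'b list \<Rightarrow> real"
  assumes fin: "finite X" and ne: "X \<noteq> {}" and l: "l > 0"
    and bd: "\<And>as bs x y. x \<in> X \<Longrightarrow> y \<in> X \<Longrightarrow> \<bar>f (as @ x # bs) - f (as @ y # bs)\<bar> \<le> c"
  shows "(\<Sum>ys\<in>lists_of_length X N.
            exp (l * ((\<Sum>zs\<in>lists_of_length X N. f zs) / card X ^ N - f ys)))
           \<le> card X ^ N * exp (l\<^sup>2 * N * c\<^sup>2 / 8)"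
  using bd
proof (induction N arbitrary: f)
  case 0
  then show ?case by simp
next
  case (Suc N)
  define K where "K = real (card X ^ N)"
  have K: "K > 0" using fin ne by (simp add: K_def card_gt_0_iff)
  define h where "h x = (\<Sum>xs\<in>lists_of_length X N. f (x # xs)) / K" for x
  define avg where "avg = (\<Sum>x\<in>X. h x) / card X"
  have avg: "(\<Sum>zs\<in>lists_of_length X (Suc N). f zs) / card X ^ Suc N = avg"
    using fin ne K
    by (simp add: sum_lists_of_length_Suc avg_def h_def K_def sum_divide_distrib[symmetric] field_simps)
  have IH: "(\<Sum>xs\<in>lists_of_length X N. exp (l * (h x - f (x # xs)))) \<le> K * exp (l\<^sup>2 * N * c\<^sup>2 / 8)"
    for x
    using Suc.IH[of "\<lambda>xs. f (x # xs)"] Suc.prems[of _ _ "x # _"] by (simp add: h_def K_def)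
  have h_diff: "h x - h y \<le> c" if "x \<in> X" "y \<in> X" for x y
  proof -
    have "h x - h y = (\<Sum>xs\<in>lists_of_length X N. f (x # xs) - f (y # xs)) / K"
      by (simp add: h_def sum_subtractf diff_divide_distrib)
    also have "\<dots> \<le> (\<Sum>xs\<in>lists_of_length X N. c) / K"
    proof (intro divide_right_mono sum_mono)
      show "f (x # xs) - f (y # xs) \<le> c" for xs
        using Suc.prems[of x y "[]" xs] that by simp
    qed (use K in simp)
    also have "\<dots> = c" using K fin ne by (simp add: card_lists_of_length K_def)
    finally show ?thesis .
  qed
  have "Max (h ` X) \<in> h ` X" "Min (h ` X) \<in> h ` X"
    using fin ne by simp_all
  then obtain x0 x1 where x0: "x0 \<in> X" "h x0 = Max (h ` X)" and x1: "x1 \<in> X" "h x1 = Min (h ` X)"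
    by (metis imageE)
  have "(\<Sum>x\<in>X. exp (l * (- h x - (\<Sum>y\<in>X. - h y) / card X)))
          \<le> card X * exp (l\<^sup>2 * (- h x1 - - h x0)\<^sup>2 / 8)"
    using x0 x1 fin by (intro Hoeffdings_lemma_pmf_of_set fin ne l) auto
  also have "\<dots> \<le> card X * exp (l\<^sup>2 * c\<^sup>2 / 8)"
  proof -
    have "h x1 \<le> h x0"
      unfolding x1(2) using fin x0(1) by (intro Min_le) auto
    hence "0 \<le> h x0 - h x1" "h x0 - h x1 \<le> c"
      using h_diff[OF x0(1) x1(1)] by auto
    hence "(- h x1 - - h x0)\<^sup>2 \<le> c\<^sup>2" by (simp add: power_mono)
    thus ?thesis by (intro mult_left_mono) (auto intro: mult_left_mono)
  qed
  finally have hoeffding: "(\<Sum>x\<in>X. exp (l * (avg - h x))) \<le> card X * exp (l\<^sup>2 * c\<^sup>2 / 8)"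
    by (simp add: avg_def sum_negf algebra_simps)
  have "(\<Sum>ys\<in>lists_of_length X (Suc N).
            exp (l * ((\<Sum>zs\<in>lists_of_length X (Suc N). f zs) / card X ^ Suc N - f ys)))
      = (\<Sum>x\<in>X. \<Sum>xs\<in>lists_of_length X N. exp (l * (avg - h x)) * exp (l * (h x - f (x # xs))))"
    unfolding avg using fin by (simp add: sum_lists_of_length_Suc exp_add[symmetric] algebra_simps)
  also have "\<dots> = (\<Sum>x\<in>X. exp (l * (avg - h x)) * (\<Sum>xs\<in>lists_of_length X N. exp (l * (h x - f (x # xs)))))"
    by (simp add: sum_distrib_left)
  also have "\<dots> \<le> (\<Sum>x\<in>X. exp (l * (avg - h x)) * (K * exp (l\<^sup>2 * N * c\<^sup>2 / 8)))"
    by (intro sum_mono mult_left_mono IH) simp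
  also have "\<dots> = (\<Sum>x\<in>X. exp (l * (avg - h x))) * (K * exp (l\<^sup>2 * N * c\<^sup>2 / 8))"
    by (simp add: sum_distrib_right)
  also have "\<dots> \<le> (card X * exp (l\<^sup>2 * c\<^sup>2 / 8)) * (K * exp (l\<^sup>2 * N * c\<^sup>2 / 8))"
    using K by (intro mult_right_mono hoeffding) auto
  also have "\<dots> = card X ^ Suc N * exp (l\<^sup>2 * Suc N * c\<^sup>2 / 8)"
    by (simp add: K_def exp_add[symmetric] algebra_simps add_divide_distrib)
  finally show ?case .
qed

lemma mcdiarmid_lower_tail_lists_of_length:
  fixes X :: "'b set" and f :: "'b list \<Rightarrow> real"
  assumes fin: "finite X" and ne: "X \<noteq> {}" and c: "c > 0" and N: "N > 0" and t: "t > 0"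
    and bd: "\<And>as bs x y. x \<in> X \<Longrightarrow> y \<in> X \<Longrightarrow> \<bar>f (as @ x # bs) - f (as @ y # bs)\<bar> \<le> c"
  shows "card {ys\<in>lists_of_length X N. f ys \<le> (\<Sum>zs\<in>lists_of_length X N. f zs) / card X ^ N - t}
           \<le> card X ^ N * exp (- 2 * t\<^sup>2 / (N * c\<^sup>2))"
proof -
  define avg where "avg = (\<Sum>zs\<in>lists_of_length X N. f zs) / card X ^ N"
  define l where "l = 4 * t / (N * c\<^sup>2)"
  have l: "l > 0" using c N t by (simp add: l_def)
  define S where "S = {ys\<in>lists_of_length X N. f ys \<le> avg - t}"
  have "card S * exp (l * t) = (\<Sum>ys\<in>S. exp (l * t))" by simp
  also have "\<dots> \<le> (\<Sum>ys\<in>S. exp (l * (avg - f ys)))"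
    using l by (intro sum_mono) (auto simp: S_def)
  also have "\<dots> \<le> (\<Sum>ys\<in>lists_of_length X N. exp (l * (avg - f ys)))"
    by (intro sum_mono2 finite_lists_of_length fin) (auto simp: S_def)
  also have "\<dots> \<le> card X ^ N * exp (l\<^sup>2 * N * c\<^sup>2 / 8)"
    unfolding avg_def by (rule mcdiarmid_mgf_lists_of_length[OF fin ne l]) (fact bd)
  finally have "card S \<le> card X ^ N * exp (l\<^sup>2 * N * c\<^sup>2 / 8) / exp (l * t)"
    by (simp add: field_simps)
  also have "\<dots> = card X ^ N * exp (l\<^sup>2 * N * c\<^sup>2 / 8 - l * t)"
    by (simp add: exp_diff)
  also have "l\<^sup>2 * N * c\<^sup>2 / 8 - l * t = - 2 * t\<^sup>2 / (N * c\<^sup>2)"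
    using c N by (simp add: l_def field_simps power2_eq_square)
  finally show ?thesis unfolding S_def avg_def .
qed

section \<open>Components and midsize vertices\<close>

lemma sym_edge_rel: "sym (edge_rel G)"
  unfolding edge_rel_def sym_def by (auto simp: insert_commute)

lemma comp_subset: "comp n G u \<subseteq> {1..n}"
  unfolding comp_def by auto

lemma finite_comp [simp]: "finite (comp n G u)"
  using comp_subset by (rule finite_subset) simp

lemma self_in_comp: "u \<in> {1..n} \<Longrightarrow> u \<in> comp n G u"
  unfolding comp_def by auto

lemma comp_eq_if_mem: "z \<in> comp n G u \<Longrightarrow> comp n G z = comp n G u"
  using sym_rtrancl[OF sym_edge_rel, of G] unfolding comp_def sym_def
  by (auto intro: rtrancl_trans)

definition vertex_pairs :: "nat \<Rightarrow> nat set set" where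
  "vertex_pairs n = {{a, b} | a b. a \<in> {1..n} \<and> b \<in> {1..n}}"

lemma finite_vertex_pairs: "finite (vertex_pairs n)"
proof -
  have "vertex_pairs n \<subseteq> (\<lambda>(a, b). {a, b}) ` ({1..n} \<times> {1..n})"
    unfolding vertex_pairs_def by force
  thus ?thesis by (rule finite_subset) simp
qed

lemma rtrancl_edge_rel_in_vertices:
  assumes "G \<subseteq> vertex_pairs n" "(u, w) \<in> (edge_rel G)\<^sup>*" "u \<in> {1..n}"
  shows "w \<in> {1..n}"
  using assms(2,3)
proof (induction rule: rtrancl_induct)
  case (step w z)
  hence "{w, z} \<in> vertex_pairs n" using assms(1) by (auto simp: edge_rel_def)
  thus ?case by (auto simp: vertex_pairs_def doubleton_eq_iff)
qed

lemma comp_Un_avoiding: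
  assumes G: "G \<subseteq> vertex_pairs n" and u: "u \<in> {1..n}"
    and H: "\<And>e. e \<in> H \<Longrightarrow> e \<inter> comp n G u = {}"
  shows "comp n (G \<union> H) u = comp n G u"
proof -
  have "(u, w) \<in> (edge_rel G)\<^sup>*" if "(u, w) \<in> (edge_rel (G \<union> H))\<^sup>*" for w
    using that
  proof (induction rule: rtrancl_induct)
    case (step w z)
    have "w \<in> comp n G u"
      using rtrancl_edge_rel_in_vertices[OF G step.IH u] step.IH by (simp add: comp_def)
    hence "{w, z} \<notin> H" using H by blast
    hence "(w, z) \<in> edge_rel G" using step.hyps(2) by (simp add: edge_rel_def)
    with step.IH show ?case by (rule rtrancl_into_rtrancl)
  qed simp
  moreover have "(edge_rel G)\<^sup>* \<subseteq> (edge_rel (G \<union> H))\<^sup>*"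
    by (intro rtrancl_mono) (auto simp: edge_rel_def)
  ultimately show ?thesis unfolding comp_def by blast
qed

definition midsize_vertices :: "nat \<Rightarrow> nat set set \<Rightarrow> nat \<Rightarrow> nat \<Rightarrow> nat set" where
  "midsize_vertices n G k B = {u \<in> {1..n}. k \<le> card (comp n G u) \<and> card (comp n G u) < B * k}"

lemma finite_midsize_vertices [simp]: "finite (midsize_vertices n G k B)"
  unfolding midsize_vertices_def by simp

lemma M_kB_eq_card_midsize_vertices:
  assumes "B \<ge> 1"
  shows "M_kB n G k B = card (midsize_vertices n G k B)"
proof -
  define big where "big j = {u \<in> {1..n}. j \<le> card (comp n G u)}" for j
  have sub: "big (B * k) \<subseteq> big k"
    using assms unfolding big_def by (auto intro: le_trans[of k "B * k"])
  have "midsize_vertices n G k B = big k - big (B * k)"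
    unfolding midsize_vertices_def big_def by auto
  hence "card (midsize_vertices n G k B) = card (big k) - card (big (B * k))"
    using sub by (simp add: card_Diff_subset finite_subset big_def)
  moreover have "card (big (B * k)) \<le> card (big k)"
    using sub by (intro card_mono) (auto simp: big_def)
  ultimately show ?thesis unfolding M_kB_def N_ge_def big_def[symmetric] by simp
qed

lemma card_midsize_vertices_comp_mem_le:
  "card {u \<in> midsize_vertices n G k B. z \<in> comp n G u} \<le> B * k"
proof (cases "\<exists>u0 \<in> midsize_vertices n G k B. z \<in> comp n G u0")
  case True
  then obtain u0 where u0: "u0 \<in> midsize_vertices n G k B" "z \<in> comp n G u0" by auto
  have "{u \<in> midsize_vertices n G k B. z \<in> comp n G u} \<subseteq> comp n G u0"
  proof
    fix u assume u: "u \<in> {u \<in> midsize_vertices n G k B. z \<in> comp n G u}"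
    hence "comp n G u = comp n G u0"
      using comp_eq_if_mem[of z n G u] comp_eq_if_mem[OF u0(2)] by simp
    moreover have "u \<in> comp n G u"
      using u by (intro self_in_comp) (simp add: midsize_vertices_def)
    ultimately show "u \<in> comp n G u0" by simp
  qed
  hence "card {u \<in> midsize_vertices n G k B. z \<in> comp n G u} \<le> card (comp n G u0)"
    by (intro card_mono) auto
  also have "\<dots> \<le> B * k" using u0(1) by (simp add: midsize_vertices_def)
  finally show ?thesis .
next
  case False
  hence "{u \<in> midsize_vertices n G k B. z \<in> comp n G u} = {}" by auto
  thus ?thesis by (simp only: card.empty zero_le)
qed

definition untouched_count :: "nat \<Rightarrow> nat set set \<Rightarrow> nat \<Rightarrow> nat \<Rightarrow> nat list list \<Rightarrow> nat" where
  "untouched_count n G k B ys =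
     card {u \<in> midsize_vertices n G k B. \<forall>y \<in> set ys. set y \<inter> comp n G u = {}}"

lemma untouched_count_le_change:
  assumes "length y \<le> l"
  shows "untouched_count n G k B (as @ x # bs) \<le> untouched_count n G k B (as @ y # bs) + l * (B * k)"
proof -
  define W where "W = midsize_vertices n G k B"
  define hit where "hit = (\<Union>z \<in> set y. {u \<in> W. z \<in> comp n G u})"
  have "untouched_count n G k B (as @ x # bs)
          \<le> card ({u \<in> W. \<forall>y \<in> set (as @ y # bs). set y \<inter> comp n G u = {}} \<union> hit)"
    unfolding untouched_count_def W_def[symmetric] hit_def by (intro card_mono) (auto simp: W_def)
  also have "\<dots> \<le> untouched_count n G k B (as @ y # bs) + card hit"
    unfolding untouched_count_def W_def[symmetric] by (rule card_Un_le)
  also have "card hit \<le> (\<Sum>z \<in> set y. card {u \<in> W. z \<in> comp n G u})"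
    unfolding hit_def by (rule card_UN_le) simp
  also have "\<dots> \<le> card (set y) * (B * k)"
    using sum_mono[of "set y" _ "\<lambda>_. B * k"] card_midsize_vertices_comp_mem_le
    unfolding W_def by simp
  also have "\<dots> \<le> l * (B * k)"
    using assms card_length[of y] by (intro mult_right_mono) auto
  finally show ?thesis by simp
qed

lemma untouched_count_lipschitz:
  assumes "length x \<le> l" "length y \<le> l"
  shows "\<bar>real (untouched_count n G k B (as @ x # bs)) - untouched_count n G k B (as @ y # bs)\<bar>
           \<le> l * B * k"
  using untouched_count_le_change[OF assms(1), of n G k B as y bs]
    untouched_count_le_change[OF assms(2), of n G k B as x bs]
  by (simp add: abs_le_iff of_nat_mult[symmetric] mult.assoc del: of_nat_mult)

lemma vertex_tuples_eq_lists_of_length: "vertex_tuples n l = lists_of_length {1..n} l"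
  unfolding vertex_tuples_def lists_of_length_def by auto

lemma card_vertex_tuples: "card (vertex_tuples n l) = n ^ l"
  by (simp add: vertex_tuples_eq_lists_of_length card_lists_of_length)

lemma finite_vertex_tuples: "finite (vertex_tuples n l)"
  by (simp add: vertex_tuples_eq_lists_of_length finite_lists_of_length)

lemma card_vertex_tuple_lists_avoiding:
  assumes "C \<subseteq> {1..n}"
  shows "card {ys \<in> lists_of_length (vertex_tuples n l) T. \<forall>y \<in> set ys. set y \<inter> C = {}}
           = (n - card C) ^ (l * T)"
proof -
  have "{ys \<in> lists_of_length (vertex_tuples n l) T. \<forall>y \<in> set ys. set y \<inter> C = {}}
          = lists_of_length (lists_of_length ({1..n} - C) l) T"
    unfolding vertex_tuples_eq_lists_of_length lists_of_length_def by auto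
  moreover have "card ({1..n} - C) = n - card C"
    using assms by (simp add: card_Diff_subset finite_subset)
  ultimately show ?thesis
    by (simp add: card_lists_of_length finite_lists_of_length power_mult)
qed

lemma sum_untouched_count:
  "(\<Sum>ys \<in> lists_of_length (vertex_tuples n l) T. real (untouched_count n G k B ys))
     = (\<Sum>u \<in> midsize_vertices n G k B. real (n - card (comp n G u)) ^ (l * T))"
proof -
  have "(\<Sum>ys \<in> lists_of_length (vertex_tuples n l) T. real (untouched_count n G k B ys))
          = (\<Sum>ys \<in> lists_of_length (vertex_tuples n l) T. \<Sum>u \<in> midsize_vertices n G k B.
               if \<forall>y \<in> set ys. set y \<inter> comp n G u = {} then 1 else 0)"
    unfolding untouched_count_def by (simp add: sum.inter_filter[symmetric])
  also have "\<dots> = (\<Sum>u \<in> midsize_vertices n G k B. \<Sum>ys \<in> lists_of_length (vertex_tuples n l) T.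
                     if \<forall>y \<in> set ys. set y \<inter> comp n G u = {} then 1 else 0)"
    by (rule sum.swap)
  also have "\<dots> = (\<Sum>u \<in> midsize_vertices n G k B. real (n - card (comp n G u)) ^ (l * T))"
  proof (rule sum.cong[OF refl])
    fix u
    show "(\<Sum>ys \<in> lists_of_length (vertex_tuples n l) T.
             if \<forall>y \<in> set ys. set y \<inter> comp n G u = {} then 1 else 0)
            = real (n - card (comp n G u)) ^ (l * T)"
      using card_vertex_tuple_lists_avoiding[OF comp_subset]
      by (simp add: sum.inter_filter[symmetric] finite_lists_of_length finite_vertex_tuples)
  qed
  finally show ?thesis .
qed

lemma exp_le_one_minus_power:
  fixes x :: real
  assumes "0 \<le> x" "x \<le> 1/2"
  shows "exp (- 2 * x * N) \<le> (1 - x) ^ N"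
proof -
  have "exp (- 2 * x) \<le> 1 / (1 + 2 * x)"
    using exp_ge_add_one_self[of "2 * x"] assms by (simp add: exp_minus field_simps)
  also have "\<dots> \<le> 1 - x"
    using assms mult_nonneg_nonneg[of x "1 - 2 * x"] by (simp add: field_simps)
  finally have "exp (- 2 * x) ^ N \<le> (1 - x) ^ N"
    by (intro power_mono) auto
  thus ?thesis by (simp add: exp_of_nat_mult[symmetric] mult.commute)
qed

text \<open>A midsize component has at most \<open>B k \<le> n / 2\<close> vertices, so a single uniform vertex misses
  it with probability at least \<open>1 - B k / n\<close>, and all \<open>l T \<le> l D n / k\<close> vertices of \<open>T\<close> uniform
  tuples miss it with probability at least \<open>exp (- 2 l B D)\<close>.\<close>
lemma card_midsize_vertices_le_mean_untouched_count:
  fixes D :: real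
  assumes n: "n > 0" and k: "k > 0" and Bk: "real (B * k) \<le> real n / 2"
    and T: "real T \<le> D * n / k"
  shows "card (midsize_vertices n G k B) * exp (- 2 * real l * real B * D)
           \<le> (\<Sum>ys \<in> lists_of_length (vertex_tuples n l) T. real (untouched_count n G k B ys))
              / real n ^ (l * T)"
proof -
  have "exp (- 2 * real l * real B * D) \<le> (real (n - card (comp n G u)) / n) ^ (l * T)"
    if u: "u \<in> midsize_vertices n G k B" for u
  proof -
    define x where "x = card (comp n G u) / real n"
    have "card (comp n G u) \<le> B * k" using u by (simp add: midsize_vertices_def)
    hence x_le: "x \<le> real (B * k) / n"
      unfolding x_def by (intro divide_right_mono) (simp only: of_nat_le_iff, simp)
    also have "\<dots> \<le> 1 / 2" using Bk n by (simp add: field_simps)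
    finally have "x \<le> 1 / 2" .
    have "x * (l * T) \<le> (real (B * k) / n) * (l * (D * n / k))"
      using x_le mult_left_mono[OF T, of l] n by (intro mult_mono) (auto simp: x_def)
    also have "\<dots> = real l * real B * D" using n k by (simp add: field_simps)
    finally have "exp (- 2 * real l * real B * D) \<le> exp (- 2 * x * (l * T))" by simp
    also have "\<dots> \<le> (1 - x) ^ (l * T)"
      using exp_le_one_minus_power[of x "l * T"] \<open>x \<le> 1 / 2\<close> by (simp add: x_def)
    also have "1 - x = real (n - card (comp n G u)) / n"
      using \<open>x \<le> 1 / 2\<close> n by (simp add: x_def field_simps)
    finally show ?thesis .
  qed
  hence "card (midsize_vertices n G k B) * exp (- 2 * real l * real B * D)
          \<le> (\<Sum>u \<in> midsize_vertices n G k B. (real (n - card (comp n G u)) / n) ^ (l * T))"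
    using sum_mono[of "midsize_vertices n G k B" "\<lambda>_. exp (- 2 * real l * real B * D)"] by simp
  also have "\<dots> = (\<Sum>ys \<in> lists_of_length (vertex_tuples n l) T. real (untouched_count n G k B ys))
                    / real n ^ (l * T)"
    by (simp add: sum_untouched_count sum_divide_distrib power_divide)
  finally show ?thesis .
qed

lemma mcdiarmid_exponent_le:
  fixes \<alpha> D t :: real
  assumes n: "n \<ge> 2" and l: "l \<ge> 1" and B: "B \<ge> 1" and k: "k \<ge> 1" and \<alpha>: "\<alpha> > 0" and D: "D > 0"
    and k_log: "real k \<le> \<alpha>\<^sup>2 * exp (- 4 * real l * real B * D) / (8 * (real l)\<^sup>2 * (real B)\<^sup>2 * D)
                             * (real n / ln (real n))"
    and T: "real T \<le> D * n / k" "T > 0"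
    and t: "3 / 4 * (\<alpha> * n * exp (- 2 * real l * real B * D)) \<le> t"
  shows "exp (- 2 * t\<^sup>2 / (T * (real l * B * k)\<^sup>2)) \<le> 1 / real n ^ 5"
proof -
  define a where "a = exp (- 2 * real l * real B * D)"
  define c where "c = real l * B * k"
  define Q where "Q = 8 * (real l)\<^sup>2 * (real B)\<^sup>2 * D"
  have n_pos: "real n > 0" and ln_pos: "ln (real n) > 0" using n by simp_all
  have Q: "Q > 0" and c: "c > 0" using l B k D by (simp_all add: Q_def c_def)
  have pos: "\<alpha> * n * a > 0" using \<alpha> n_pos by (simp add: a_def)
  have "exp (- 4 * real l * real B * D) = a\<^sup>2"
    unfolding a_def power2_eq_square exp_add[symmetric] by simp
  hence k_ln: "k * ln n \<le> \<alpha>\<^sup>2 * a\<^sup>2 / Q * n"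
    using mult_right_mono[OF k_log, of "ln n"] ln_pos by (simp add: Q_def)
  have "T * c\<^sup>2 \<le> D * n / k * c\<^sup>2" using T by (intro mult_right_mono) auto
  also have "\<dots> = Q / 8 * n * k" using k by (simp add: Q_def c_def power2_eq_square)
  finally have "5 * ln n * (T * c\<^sup>2) \<le> 5 * ln n * (Q / 8 * n * k)"
    using ln_pos by (intro mult_left_mono) auto
  also have "\<dots> = 5 / 8 * n * Q * (k * ln n)" by (simp add: algebra_simps)
  also have "\<dots> \<le> 5 / 8 * n * Q * (\<alpha>\<^sup>2 * a\<^sup>2 / Q * n)"
    using k_ln Q n_pos by (intro mult_left_mono) auto
  also have "\<dots> = 5 / 8 * (\<alpha> * n * a)\<^sup>2" using Q by (simp add: power2_eq_square)
  also have "\<dots> \<le> 9 / 8 * (\<alpha> * n * a)\<^sup>2"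
    using zero_le_power2[of "\<alpha> * n * a"] by linarith
  also have "\<dots> = 2 * (3 / 4 * (\<alpha> * n * a))\<^sup>2" by (simp add: power2_eq_square)
  also have "\<dots> \<le> 2 * t\<^sup>2" using t pos by (intro mult_left_mono power_mono) (auto simp: a_def)
  finally have "exp (- 2 * t\<^sup>2 / (T * c\<^sup>2)) \<le> exp (- (5 * ln n))"
    using T c by (simp add: field_simps)
  moreover have "exp (- (5 * ln n)) = 1 / real n ^ 5"
  proof -
    have "exp (5 * ln n) = exp (ln (real n ^ 5))" by (simp add: ln_realpow)
    thus ?thesis using n_pos by (simp add: exp_minus divide_inverse)
  qed
  ultimately show ?thesis by (simp add: c_def)
qed

text \<open>The mean is at least \<open>\<alpha> n exp (- 2 l B D)\<close>, at least four times the threshold as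
  \<open>B \<ge> 2\<close>, and changing one tuple changes the count by at most \<open>l B k\<close>; the bound on \<open>k\<close> is
  exactly what makes McDiarmid's exponent at least \<open>5 ln n\<close>.\<close>
lemma card_low_untouched_count_le:
  fixes \<alpha> D :: real
  assumes n: "n \<ge> 2" and l: "l \<ge> 1" and B: "B \<ge> 2" and k: "k \<ge> 1" and \<alpha>: "\<alpha> > 0" and D: "D > 0"
    and k_log: "real k \<le> \<alpha>\<^sup>2 * exp (- 4 * real l * real B * D) / (8 * (real l)\<^sup>2 * (real B)\<^sup>2 * D)
                             * (real n / ln (real n))"
    and k_lin: "real k \<le> real n / (2 * real B)"
    and midsize: "\<alpha> * n \<le> card (midsize_vertices n G k B)"
    and T: "real T \<le> D * n / k"
  shows "card {ys \<in> lists_of_length (vertex_tuples n l) T.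
            untouched_count n G k B ys \<le> \<alpha> / (2 * real B) * exp (- 2 * real l * real B * D) * n}
           \<le> real n ^ (l * T) / real n ^ 5"
proof -
  define a where "a = exp (- 2 * real l * real B * D)"
  define thr where "thr = \<alpha> / (2 * real B) * a * n"
  define L where "L = lists_of_length (vertex_tuples n l) T"
  define avg where "avg = (\<Sum>ys \<in> L. real (untouched_count n G k B ys)) / real n ^ (l * T)"
  have n_pos: "real n > 0" using n by simp
  have a: "0 < a" "a \<le> 1" using l B D by (auto simp: a_def)
  have "real (B * k) \<le> real n / 2" using k_lin B by (simp add: field_simps)
  hence "card (midsize_vertices n G k B) * a \<le> avg"
    unfolding a_def avg_def L_def
    using card_midsize_vertices_le_mean_untouched_count[OF _ _ _ T] n k by simp
  hence avg: "\<alpha> * n * a \<le> avg"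
    using midsize a by (meson mult_right_mono less_imp_le order_trans)
  have "\<alpha> * n * a / (2 * B) \<le> \<alpha> * n * a / 4"
    using \<alpha> a n_pos B by (intro divide_left_mono) auto
  hence thr: "thr \<le> \<alpha> * n * a / 4" by (simp add: thr_def)
  have pos: "\<alpha> * n * a > 0" using \<alpha> n_pos a by simp
  show ?thesis
  proof (cases "T = 0")
    case True
    have "\<alpha> * n * a \<le> \<alpha> * n" using \<alpha> n_pos by (intro mult_left_le a) simp
    hence "thr < card (midsize_vertices n G k B)" using midsize thr pos by linarith
    hence none: "{ys \<in> L. untouched_count n G k B ys \<le> thr} = {}"
      using True by (auto simp: L_def untouched_count_def)
    show ?thesis unfolding a_def[symmetric] thr_def[symmetric] L_def[symmetric] none by simp
  next
    case False
    define t where "t = avg - thr"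
    define c where "c = real l * B * k"
    have c: "c > 0" using l B k by (simp add: c_def)
    have t: "3 / 4 * (\<alpha> * n * a) \<le> t" using avg thr by (simp add: t_def)
    have exponent: "exp (- 2 * t\<^sup>2 / (T * c\<^sup>2)) \<le> 1 / real n ^ 5"
      unfolding c_def using n l B k \<alpha> D k_log T False t
      by (intro mcdiarmid_exponent_le) (auto simp: a_def)
    have "real (card (vertex_tuples n l) ^ T) = real n ^ (l * T)"
      by (simp add: card_vertex_tuples power_mult)
    hence "{ys \<in> L. untouched_count n G k B ys \<le> thr}
             = {ys \<in> L. untouched_count n G k B ys
                  \<le> (\<Sum>zs \<in> L. real (untouched_count n G k B zs)) / card (vertex_tuples n l) ^ T - t}"
      by (simp add: t_def avg_def)
    also have "card \<dots> \<le> card (vertex_tuples n l) ^ T * exp (- 2 * t\<^sup>2 / (T * c\<^sup>2))"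
      unfolding L_def
    proof (rule mcdiarmid_lower_tail_lists_of_length)
      show "\<bar>real (untouched_count n G k B (as @ x # bs)) - untouched_count n G k B (as @ y # bs)\<bar> \<le> c"
        if "x \<in> vertex_tuples n l" "y \<in> vertex_tuples n l" for as bs x y
        using that untouched_count_lipschitz[of x l y] by (simp add: c_def vertex_tuples_def)
      show "vertex_tuples n l \<noteq> {}"
        using card_vertex_tuples[of n l] n by auto
    qed (use False c t pos in \<open>simp_all add: finite_vertex_tuples\<close>)
    also have "\<dots> \<le> real n ^ (l * T) * (1 / real n ^ 5)"
      unfolding \<open>real (card (vertex_tuples n l) ^ T) = real n ^ (l * T)\<close>
      using exponent by (intro mult_left_mono) auto
    finally show ?thesis unfolding a_def[symmetric] thr_def[symmetric] L_def[symmetric] by simp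
  qed
qed

section \<open>The random process\<close>

definition next_tuples :: "(nat \<Rightarrow> 'a \<Rightarrow> nat list) \<Rightarrow> nat \<Rightarrow> nat \<Rightarrow> 'a \<Rightarrow> nat list list" where
  "next_tuples v m T \<omega> = map (\<lambda>i. v i \<omega>) [Suc m..<Suc (m + T)]"

lemma next_tuples_0 [simp]: "next_tuples v m 0 \<omega> = []"
  by (simp add: next_tuples_def)

lemma next_tuples_Suc: "next_tuples v m (Suc T) \<omega> = v (Suc m) \<omega> # next_tuples v (Suc m) T \<omega>"
  by (simp add: next_tuples_def upt_rec)

lemma set_next_tuples: "set (next_tuples v m T \<omega>) = (\<lambda>i. v i \<omega>) ` {m<..m + T}"
  by (auto simp: next_tuples_def)

lemma graph_at_add:
  "graph_at E (m + d) \<omega> = graph_at E m \<omega> \<union> (\<Union>i \<in> {m<..m + d}. E i \<omega>)"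
  unfolding graph_at_def
proof (intro equalityI subsetI)
  fix e assume "e \<in> (\<Union>i \<in> {1..m + d}. E i \<omega>)"
  then obtain i where "i \<in> {1..m + d}" "e \<in> E i \<omega>" by auto
  thus "e \<in> (\<Union>i \<in> {1..m}. E i \<omega>) \<union> (\<Union>i \<in> {m<..m + d}. E i \<omega>)"
    by (cases "i \<le> m") auto
qed auto

lemma graph_at_Suc: "graph_at E (Suc m) \<omega> = graph_at E m \<omega> \<union> E (Suc m) \<omega>"
  unfolding graph_at_def by (auto simp: atLeastAtMostSuc_conv)

locale vertex_rule =
  fixes M :: "'a measure" and F :: "nat \<Rightarrow> 'a measure" and n l :: nat
    and v :: "nat \<Rightarrow> 'a \<Rightarrow> nat list" and E :: "nat \<Rightarrow> 'a \<Rightarrow> nat set set"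
  assumes rule: "ell_vertex_rule M F n l v E"
begin

sublocale prob_space M
  using rule by (simp add: ell_vertex_rule_def)

lemma sets_F_subset: "sets (F m) \<subseteq> sets M"
  using rule by (simp add: ell_vertex_rule_def)

lemma space_F: "space (F m) = space M"
  using rule by (simp add: ell_vertex_rule_def)

lemma sets_F_mono: "i \<le> j \<Longrightarrow> sets (F i) \<subseteq> sets (F j)"
  using rule by (simp add: ell_vertex_rule_def)

lemma v_in_vertex_tuples: "m \<ge> 1 \<Longrightarrow> \<omega> \<in> space M \<Longrightarrow> v m \<omega> \<in> vertex_tuples n l"
  using rule by (simp add: ell_vertex_rule_def)

lemma prob_Int_v_eq:
  "m \<ge> 1 \<Longrightarrow> A \<in> sets (F (m - 1)) \<Longrightarrow> xs \<in> vertex_tuples n l \<Longrightarrow>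
     prob (A \<inter> {\<omega> \<in> space M. v m \<omega> = xs}) = prob A / real n ^ l"
  using rule by (simp add: ell_vertex_rule_def)

lemma edge_subset_v:
  assumes "m \<ge> 1" "\<omega> \<in> space M" "e \<in> E m \<omega>"
  shows "e \<subseteq> set (v m \<omega>)"
  using rule assms unfolding ell_vertex_rule_def by blast

lemma v_eq_measurable: "m \<ge> 1 \<Longrightarrow> {\<omega> \<in> space M. v m \<omega> = xs} \<in> sets (F m)"
  using rule measurable_sets[of "v m" "F m" "count_space UNIV" "{xs}"]
  by (simp add: ell_vertex_rule_def space_F vimage_def Int_def conj_commute)

lemma E_eq_measurable: "m \<ge> 1 \<Longrightarrow> {\<omega> \<in> space M. E m \<omega> = H} \<in> sets (F m)"
  using rule measurable_sets[of "E m" "F m" "count_space UNIV" "{H}"]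
  by (simp add: ell_vertex_rule_def space_F vimage_def Int_def conj_commute)

lemma E_subset_vertex_pairs:
  assumes "m \<ge> 1" "\<omega> \<in> space M"
  shows "E m \<omega> \<subseteq> vertex_pairs n"
proof
  fix e assume e: "e \<in> E m \<omega>"
  then obtain a b where ab: "e = {a, b}"
    using rule assms unfolding ell_vertex_rule_def by blast
  have "set (v m \<omega>) \<subseteq> {1..n}"
    using v_in_vertex_tuples[OF assms] by (simp add: vertex_tuples_def)
  hence "a \<in> {1..n}" "b \<in> {1..n}"
    using edge_subset_v[OF assms e] ab by auto
  thus "e \<in> vertex_pairs n"
    unfolding vertex_pairs_def ab by blast
qed

lemma graph_at_subset_vertex_pairs: "\<omega> \<in> space M \<Longrightarrow> graph_at E m \<omega> \<subseteq> vertex_pairs n"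
  using E_subset_vertex_pairs unfolding graph_at_def by fastforce

lemma graph_at_eq_measurable: "{\<omega> \<in> space M. graph_at E m \<omega> = G} \<in> sets (F m)"
proof (induction m arbitrary: G)
  case 0
  have "{\<omega> \<in> space M. graph_at E 0 \<omega> = G} = (if G = {} then space (F 0) else {})"
    using space_F by (auto simp: graph_at_def)
  thus ?case by simp
next
  case (Suc m)
  define P where "P = {p \<in> Pow (vertex_pairs n) \<times> Pow (vertex_pairs n). fst p \<union> snd p = G}"
  have "{\<omega> \<in> space M. graph_at E (Suc m) \<omega> = G}
      = (\<Union>p \<in> P. {\<omega> \<in> space M. graph_at E m \<omega> = fst p} \<inter> {\<omega> \<in> space M. E (Suc m) \<omega> = snd p})"
    unfolding P_def graph_at_Suc
    using graph_at_subset_vertex_pairs E_subset_vertex_pairs[of "Suc m"] by auto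
  also have "\<dots> \<in> sets (F (Suc m))"
  proof (intro sets.finite_UN ballI sets.Int)
    fix p :: "nat set set \<times> nat set set"
    show "finite P" using finite_vertex_pairs by (simp add: P_def)
    show "{\<omega> \<in> space M. graph_at E m \<omega> = fst p} \<in> sets (F (Suc m))"
      using Suc.IH sets_F_mono[of m "Suc m"] by auto
    show "{\<omega> \<in> space M. E (Suc m) \<omega> = snd p} \<in> sets (F (Suc m))"
      by (rule E_eq_measurable) simp
  qed
  finally show ?case .
qed

lemma graph_at_pred_measurable: "{\<omega> \<in> space M. Q (graph_at E m \<omega>)} \<in> sets (F m)"
proof -
  have "{\<omega> \<in> space M. Q (graph_at E m \<omega>)}
          = (\<Union>G \<in> {G \<in> Pow (vertex_pairs n). Q G}. {\<omega> \<in> space M. graph_at E m \<omega> = G})"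
    using graph_at_subset_vertex_pairs by auto
  also have "\<dots> \<in> sets (F m)"
    using finite_vertex_pairs by (intro sets.finite_UN graph_at_eq_measurable) auto
  finally show ?thesis .
qed

lemma next_tuples_in_lists_of_length:
  "\<omega> \<in> space M \<Longrightarrow> next_tuples v m T \<omega> \<in> lists_of_length (vertex_tuples n l) T"
  unfolding lists_of_length_def set_next_tuples using v_in_vertex_tuples
  by (auto simp: next_tuples_def)

lemma next_tuples_eq_measurable: "{\<omega> \<in> space M. next_tuples v m T \<omega> = ys} \<in> sets M"
proof (induction T arbitrary: m ys)
  case 0
  show ?case by (cases "ys = []") simp_all
next
  case (Suc T)
  show ?case
  proof (cases ys)
    case Nil
    thus ?thesis by (simp add: next_tuples_Suc)
  next
    case (Cons y ys')
    have "{\<omega> \<in> space M. v (Suc m) \<omega> = y} \<in> sets M"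
      using subsetD[OF sets_F_subset v_eq_measurable] by simp
    hence "{\<omega> \<in> space M. v (Suc m) \<omega> = y} \<inter> {\<omega> \<in> space M. next_tuples v (Suc m) T \<omega> = ys'}
             \<in> sets M"
      using Suc.IH by (rule sets.Int)
    moreover have "{\<omega> \<in> space M. next_tuples v m (Suc T) \<omega> = ys}
            = {\<omega> \<in> space M. v (Suc m) \<omega> = y} \<inter> {\<omega> \<in> space M. next_tuples v (Suc m) T \<omega> = ys'}"
      by (auto simp: Cons next_tuples_Suc)
    ultimately show ?thesis by simp
  qed
qed

lemma prob_Int_next_tuples_eq:
  assumes "A \<in> sets (F m)" "ys \<in> lists_of_length (vertex_tuples n l) T"
  shows "prob (A \<inter> {\<omega> \<in> space M. next_tuples v m T \<omega> = ys}) = prob A / real n ^ (l * T)"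
  using assms
proof (induction T arbitrary: m A ys)
  case 0
  hence "A \<subseteq> space M" using sets.sets_into_space[of A "F m"] by (simp add: space_F)
  thus ?case using 0 by (auto simp: lists_of_length_def Int_absorb2)
next
  case (Suc T)
  obtain y ys' where ys: "ys = y # ys'" "y \<in> vertex_tuples n l"
      "ys' \<in> lists_of_length (vertex_tuples n l) T"
    using Suc.prems(2) by (cases ys) (auto simp: lists_of_length_def)
  define A' where "A' = A \<inter> {\<omega> \<in> space M. v (Suc m) \<omega> = y}"
  have "A' \<in> sets (F (Suc m))"
    unfolding A'_def using Suc.prems(1) sets_F_mono[of m "Suc m"] v_eq_measurable[of "Suc m" y] by auto
  moreover have "A \<inter> {\<omega> \<in> space M. next_tuples v m (Suc T) \<omega> = ys}
                   = A' \<inter> {\<omega> \<in> space M. next_tuples v (Suc m) T \<omega> = ys'}"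
    by (auto simp: A'_def ys next_tuples_Suc)
  moreover have "prob A' = prob A / real n ^ l"
    unfolding A'_def using prob_Int_v_eq[of "Suc m" A y] Suc.prems(1) ys(2) by simp
  ultimately show ?case using Suc.IH[OF _ ys(3)] by (simp add: power_add power_mult)
qed

lemma graph_at_next_tuples_event_eq:
  "{\<omega> \<in> space M. P (graph_at E m \<omega>) \<and> next_tuples v m T \<omega> \<in> Bad (graph_at E m \<omega>)}
     = (\<Union>p \<in> Sigma {G \<in> Pow (vertex_pairs n). P G} (\<lambda>G. Bad G \<inter> lists_of_length (vertex_tuples n l) T).
          {\<omega> \<in> space M. graph_at E m \<omega> = fst p} \<inter> {\<omega> \<in> space M. next_tuples v m T \<omega> = snd p})"
  using graph_at_subset_vertex_pairs next_tuples_in_lists_of_length by auto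

lemma finite_graph_at_next_tuples_index:
  "finite (Sigma {G \<in> Pow (vertex_pairs n). P G} (\<lambda>G. Bad G \<inter> lists_of_length (vertex_tuples n l) T))"
  using finite_vertex_pairs
  by (intro finite_SigmaI finite_Int[OF disjI2] finite_lists_of_length finite_vertex_tuples) auto

lemma graph_at_next_tuples_event_measurable:
  "{\<omega> \<in> space M. P (graph_at E m \<omega>) \<and> next_tuples v m T \<omega> \<in> Bad (graph_at E m \<omega>)} \<in> sets M"
  unfolding graph_at_next_tuples_event_eq
proof (intro sets.finite_UN finite_graph_at_next_tuples_index ballI)
  fix p :: "nat set set \<times> nat list list"
  show "{\<omega> \<in> space M. graph_at E m \<omega> = fst p} \<inter> {\<omega> \<in> space M. next_tuples v m T \<omega> = snd p}
          \<in> sets M"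
    using subsetD[OF sets_F_subset graph_at_eq_measurable] next_tuples_eq_measurable
    by (rule sets.Int)
qed

lemma prob_graph_at_next_tuples_event_le:
  assumes p: "0 \<le> p"
    and bad: "\<And>G. G \<subseteq> vertex_pairs n \<Longrightarrow> P G \<Longrightarrow>
                 card (Bad G \<inter> lists_of_length (vertex_tuples n l) T) \<le> p * real n ^ (l * T)"
  shows "prob {\<omega> \<in> space M. P (graph_at E m \<omega>) \<and> next_tuples v m T \<omega> \<in> Bad (graph_at E m \<omega>)} \<le> p"
proof -
  define Gs where "Gs = {G \<in> Pow (vertex_pairs n). P G}"
  define L where "L G = Bad G \<inter> lists_of_length (vertex_tuples n l) T" for G
  define A where "A G = {\<omega> \<in> space M. graph_at E m \<omega> = G}" for G
  have A: "A G \<in> sets (F m)" for G unfolding A_def by (rule graph_at_eq_measurable)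
  have finite: "finite Gs" "finite (L G)" for G
    using finite_vertex_pairs unfolding Gs_def L_def
    by (auto intro!: finite_Int[OF disjI2] finite_lists_of_length finite_vertex_tuples)
  have "prob {\<omega> \<in> space M. P (graph_at E m \<omega>) \<and> next_tuples v m T \<omega> \<in> Bad (graph_at E m \<omega>)}
          \<le> (\<Sum>p \<in> Sigma Gs L. prob (A (fst p) \<inter> {\<omega> \<in> space M. next_tuples v m T \<omega> = snd p}))"
    unfolding graph_at_next_tuples_event_eq Gs_def[symmetric] L_def[symmetric] A_def[symmetric]
    using subsetD[OF sets_F_subset A] next_tuples_eq_measurable
      finite_graph_at_next_tuples_index[of P Bad T]
    by (intro finite_measure_subadditive_finite) (auto simp: Gs_def L_def)
  also have "\<dots> = (\<Sum>G \<in> Gs. \<Sum>ys \<in> L G. prob (A G \<inter> {\<omega> \<in> space M. next_tuples v m T \<omega> = ys}))"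
    using finite by (simp add: sum.Sigma case_prod_beta)
  also have "\<dots> = (\<Sum>G \<in> Gs. card (L G) * (prob (A G) / real n ^ (l * T)))"
    using A by (simp add: prob_Int_next_tuples_eq L_def)
  also have "\<dots> \<le> (\<Sum>G \<in> Gs. p * prob (A G))"
  proof (rule sum_mono)
    fix G assume "G \<in> Gs"
    hence "card (L G) \<le> p * real n ^ (l * T)" using bad by (simp add: Gs_def L_def)
    hence le: "card (L G) * prob (A G) \<le> p * real n ^ (l * T) * prob (A G)"
      by (intro mult_right_mono) auto
    show "card (L G) * (prob (A G) / real n ^ (l * T)) \<le> p * prob (A G)"
    proof (cases "real n ^ (l * T) = 0")
      case True
      show ?thesis unfolding True using p by simp
    next
      case False
      moreover have "real n ^ (l * T) \<ge> 0" by simp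
      ultimately have "real n ^ (l * T) > 0" by linarith
      thus ?thesis using le by (simp add: field_simps)
    qed
  qed
  also have "\<dots> = p * prob (\<Union>G \<in> Gs. A G)"
    using finite A sets_F_subset
    by (subst finite_measure_finite_Union) (auto simp: sum_distrib_left disjoint_family_on_def A_def)
  also have "\<dots> \<le> p" using p by (simp add: mult_left_le)
  finally show ?thesis .
qed

lemma comp_graph_at_add_eq:
  assumes \<omega>: "\<omega> \<in> space M" and u: "u \<in> {1..n}" and d: "d \<le> T"
    and avoid: "\<forall>y \<in> set (next_tuples v m T \<omega>). set y \<inter> comp n (graph_at E m \<omega>) u = {}"
  shows "comp n (graph_at E (m + d) \<omega>) u = comp n (graph_at E m \<omega>) u"
  unfolding graph_at_add
proof (rule comp_Un_avoiding[OF graph_at_subset_vertex_pairs[OF \<omega>] u])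
  fix e assume "e \<in> (\<Union>i \<in> {m<..m + d}. E i \<omega>)"
  then obtain i where i: "i \<in> {m<..m + d}" "e \<in> E i \<omega>" by blast
  hence "e \<subseteq> set (v i \<omega>)" using edge_subset_v[OF _ \<omega>] by simp
  moreover have "v i \<omega> \<in> set (next_tuples v m T \<omega>)" using i d by (auto simp: set_next_tuples)
  ultimately show "e \<inter> comp n (graph_at E m \<omega>) u = {}" using avoid by blast
qed

lemma untouched_count_next_tuples_le_M_kB:
  assumes "\<omega> \<in> space M" "d \<le> T" "B \<ge> 1"
  shows "untouched_count n (graph_at E m \<omega>) k B (next_tuples v m T \<omega>)
           \<le> M_kB n (graph_at E (m + d) \<omega>) k B"
proof -
  have "{u \<in> midsize_vertices n (graph_at E m \<omega>) k B.
           \<forall>y \<in> set (next_tuples v m T \<omega>). set y \<inter> comp n (graph_at E m \<omega>) u = {}}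
          \<subseteq> midsize_vertices n (graph_at E (m + d) \<omega>) k B"
    using comp_graph_at_add_eq[OF assms(1) _ assms(2)] by (auto simp: midsize_vertices_def)
  hence "untouched_count n (graph_at E m \<omega>) k B (next_tuples v m T \<omega>)
           \<le> card (midsize_vertices n (graph_at E (m + d) \<omega>) k B)"
    unfolding untouched_count_def by (intro card_mono) auto
  thus ?thesis using M_kB_eq_card_midsize_vertices[OF assms(3)] by simp
qed

end

section \<open>Persistence of midsize components\<close>

locale midsize_persistence = vertex_rule +
  fixes \<alpha> D :: real and B :: nat
  assumes n_ge_2: "n \<ge> 2" and l_pos: "l \<ge> 1" and \<alpha>_pos: "\<alpha> > 0" and D_pos: "D > 0"
    and B_ge_2: "B \<ge> 2"
begin

definition threshold :: real where
  "threshold = \<alpha> / (2 * real B) * exp (- 2 * real l * real B * D) * real n"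

definition admissible :: "nat \<Rightarrow> bool" where
  "admissible k \<longleftrightarrow> 1 \<le> k \<and>
     real k \<le> min (\<alpha>\<^sup>2 * exp (- 4 * real l * real B * D) / (8 * (real l)\<^sup>2 * (real B)\<^sup>2 * D)
                    * (real n / ln (real n)))
                 (real n / (2 * real B))"

definition collapse_event :: "nat \<Rightarrow> nat \<Rightarrow> 'a set" where
  "collapse_event m k = {\<omega> \<in> space M. \<alpha> * n \<le> of_int (M_kB n (graph_at E m \<omega>) k B) \<and>
     (\<exists>\<Delta>::nat. real \<Delta> \<le> D * n / k \<and> of_int (M_kB n (graph_at E (m + \<Delta>) \<omega>) k B) \<le> threshold)}"

lemma collapse_event_measurable: "collapse_event m k \<in> sets M"
proof -
  have "collapse_event m k
          = (\<Union>\<Delta> \<in> {\<Delta>::nat. real \<Delta> \<le> D * n / k}.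
               {\<omega> \<in> space M. \<alpha> * n \<le> of_int (M_kB n (graph_at E m \<omega>) k B)} \<inter>
               {\<omega> \<in> space M. of_int (M_kB n (graph_at E (m + \<Delta>) \<omega>) k B) \<le> threshold})"
    unfolding collapse_event_def by blast
  also have "\<dots> \<in> sets M"
    using subsetD[OF sets_F_subset graph_at_pred_measurable] by (intro sets.countable_UN) auto
  finally show ?thesis .
qed

lemma collapse_event_subset:
  "collapse_event m k \<subseteq>
     {\<omega> \<in> space M. \<alpha> * n \<le> card (midsize_vertices n (graph_at E m \<omega>) k B) \<and>
        next_tuples v m (nat \<lfloor>D * n / k\<rfloor>) \<omega> \<in>
          {ys. untouched_count n (graph_at E m \<omega>) k B ys \<le> threshold}}"
proof safe
  fix \<omega> assume "\<omega> \<in> collapse_event m k"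
  then obtain \<Delta> :: nat where \<omega>: "\<omega> \<in> space M"
      and start: "\<alpha> * n \<le> of_int (M_kB n (graph_at E m \<omega>) k B)"
      and \<Delta>: "real \<Delta> \<le> D * n / k"
      and stop: "of_int (M_kB n (graph_at E (m + \<Delta>) \<omega>) k B) \<le> threshold"
    unfolding collapse_event_def by blast
  have B: "B \<ge> 1" using B_ge_2 by simp
  show "\<alpha> * n \<le> card (midsize_vertices n (graph_at E m \<omega>) k B)"
    using start M_kB_eq_card_midsize_vertices[OF B] by simp
  show "\<omega> \<in> space M" by (fact \<omega>)
  have "\<Delta> \<le> nat \<lfloor>D * n / k\<rfloor>" using \<Delta> by (rule le_nat_floor)
  hence "int (untouched_count n (graph_at E m \<omega>) k B (next_tuples v m (nat \<lfloor>D * n / k\<rfloor>) \<omega>))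
           \<le> M_kB n (graph_at E (m + \<Delta>) \<omega>) k B"
    by (rule untouched_count_next_tuples_le_M_kB[OF \<omega> _ B])
  hence "real (untouched_count n (graph_at E m \<omega>) k B (next_tuples v m (nat \<lfloor>D * n / k\<rfloor>) \<omega>))
           \<le> of_int (M_kB n (graph_at E (m + \<Delta>) \<omega>) k B)"
    by (metis of_int_le_iff of_int_of_nat_eq)
  thus "untouched_count n (graph_at E m \<omega>) k B (next_tuples v m (nat \<lfloor>D * n / k\<rfloor>) \<omega>) \<le> threshold"
    using stop by linarith
qed

lemma prob_collapse_event_le:
  assumes "admissible k"
  shows "prob (collapse_event m k) \<le> 1 / real n ^ 5"
proof -
  define T where "T = nat \<lfloor>D * n / k\<rfloor>"
  have T: "real T \<le> D * n / k" using D_pos by (simp add: T_def)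
  have "prob (collapse_event m k)
          \<le> prob {\<omega> \<in> space M. \<alpha> * n \<le> card (midsize_vertices n (graph_at E m \<omega>) k B) \<and>
               next_tuples v m T \<omega> \<in> {ys. untouched_count n (graph_at E m \<omega>) k B ys \<le> threshold}}"
    using collapse_event_subset graph_at_next_tuples_event_measurable unfolding T_def
    by (rule finite_measure_mono)
  also have "\<dots> \<le> 1 / real n ^ 5"
  proof (rule prob_graph_at_next_tuples_event_le)
    fix G assume "\<alpha> * n \<le> card (midsize_vertices n G k B)"
    hence "card {ys \<in> lists_of_length (vertex_tuples n l) T. untouched_count n G k B ys \<le> threshold}
             \<le> real n ^ (l * T) / real n ^ 5"
      unfolding threshold_def
      using assms n_ge_2 l_pos B_ge_2 \<alpha>_pos D_pos T
      by (intro card_low_untouched_count_le) (auto simp: admissible_def)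
    thus "card ({ys. untouched_count n G k B ys \<le> threshold} \<inter> lists_of_length (vertex_tuples n l) T)
            \<le> 1 / real n ^ 5 * real n ^ (l * T)"
      by (simp add: Int_commute Collect_conj_eq[symmetric] Int_def)
  qed simp
  finally show ?thesis .
qed

lemma admissible_le_n: "admissible k \<Longrightarrow> k \<le> n"
proof -
  assume "admissible k"
  hence "real k \<le> real n / (2 * real B)" by (simp add: admissible_def)
  also have "\<dots> \<le> real n"
    using B_ge_2 mult_left_mono[of 1 "2 * real B" "real n"] by (simp add: divide_le_eq)
  finally show "k \<le> n" by simp
qed

lemma prob_no_collapse_event_ge:
  "prob (space M - (\<Union>p \<in> {..n\<^sup>2} \<times> Collect admissible. collapse_event (fst p) (snd p)))
     \<ge> 1 - 1 / real n"
proof -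
  define I where "I = {..n\<^sup>2} \<times> Collect admissible"
  have I: "I \<subseteq> {..n\<^sup>2} \<times> {1..n}" using admissible_le_n by (auto simp: I_def admissible_def)
  hence finite_I: "finite I" by (rule finite_subset) simp
  have "card I \<le> (n\<^sup>2 + 1) * n"
    using card_mono[OF _ I] by (simp add: card_cartesian_product)
  also have "\<dots> = n ^ 3 + n" by (simp add: power2_eq_square power3_eq_cube algebra_simps)
  also have "\<dots> \<le> 2 * n ^ 3" using n_ge_2 by (simp add: power3_eq_cube)
  also have "\<dots> \<le> n * n ^ 3" using n_ge_2 by (rule mult_right_mono) simp
  also have "\<dots> = n ^ 4" by (simp add: eval_nat_numeral)
  finally have card_I: "real (card I) \<le> real n ^ 4" by (simp only: of_nat_le_iff of_nat_power[symmetric])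
  have events: "(\<lambda>p. collapse_event (fst p) (snd p)) ` I \<subseteq> sets M"
    using collapse_event_measurable by auto
  have "prob (\<Union>p \<in> I. collapse_event (fst p) (snd p)) \<le> (\<Sum>p \<in> I. prob (collapse_event (fst p) (snd p)))"
    using finite_I events by (rule finite_measure_subadditive_finite)
  also have "\<dots> \<le> (\<Sum>p \<in> I. 1 / real n ^ 5)"
    using prob_collapse_event_le by (intro sum_mono) (auto simp: I_def)
  also have "\<dots> = card I / real n ^ 5" by simp
  also have "\<dots> \<le> real n ^ 4 / real n ^ 5" using card_I by (intro divide_right_mono) auto
  also have "\<dots> = 1 / real n" using n_ge_2 by (simp add: power_numeral_reduce)
  finally have "prob (\<Union>p \<in> I. collapse_event (fst p) (snd p)) \<le> 1 / real n" .
  moreover have "(\<Union>p \<in> I. collapse_event (fst p) (snd p)) \<in> sets M"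
    using finite_I events by (intro sets.finite_UN) auto
  ultimately show ?thesis
    using prob_compl[of "\<Union>p \<in> I. collapse_event (fst p) (snd p)"] unfolding I_def by simp
qed

lemma prob_midsize_persists_ge:
  "prob {\<omega> \<in> space M. \<forall>m k. m \<le> n\<^sup>2 \<and> admissible k \<longrightarrow>
          (\<alpha> * n \<le> of_int (M_kB n (graph_at E m \<omega>) k B) \<longrightarrow>
            (\<forall>\<Delta>::nat. real \<Delta> \<le> D * n / k \<longrightarrow> of_int (M_kB n (graph_at E (m + \<Delta>) \<omega>) k B) > threshold))}
     \<ge> 1 - 1 / real n"
proof -
  have "{\<omega> \<in> space M. \<forall>m k. m \<le> n\<^sup>2 \<and> admissible k \<longrightarrow>
          (\<alpha> * n \<le> of_int (M_kB n (graph_at E m \<omega>) k B) \<longrightarrow>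
            (\<forall>\<Delta>::nat. real \<Delta> \<le> D * n / k \<longrightarrow> of_int (M_kB n (graph_at E (m + \<Delta>) \<omega>) k B) > threshold))}
        = space M - (\<Union>p \<in> {..n\<^sup>2} \<times> Collect admissible. collapse_event (fst p) (snd p))"
    unfolding collapse_event_def by (auto simp: not_less) (fastforce simp: not_less)+
  thus ?thesis using prob_no_collapse_event_ge by simp
qed

end

theorem lemma2:
  fixes M :: "'a measure" and F :: "nat \<Rightarrow> 'a measure" and n l B :: nat
    and v :: "nat \<Rightarrow> 'a \<Rightarrow> nat list" and E :: "nat \<Rightarrow> 'a \<Rightarrow> nat set set"
    and \<alpha> D :: real
  assumes "l \<ge> 2" and "ell_vertex_rule M F n l v E"
    and "0 < \<alpha>" and "\<alpha> \<le> 1" and "D > 0" and "B \<ge> 2"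
  shows "measure M {\<omega> \<in> space M.
           \<forall>m k. m \<le> n ^ 2 \<and> 1 \<le> k \<and>
             real k \<le> min (\<alpha>\<^sup>2 * exp (- 4 * l * B * D) / (8 * (real l)\<^sup>2 * (real B)\<^sup>2 * D)
                              * (real n / ln (real n)))
                           (real n / (2 * B)) \<longrightarrow>
             (of_int (M_kB n (graph_at E m \<omega>) k B) \<ge> \<alpha> * n \<longrightarrow>
               (\<forall>\<Delta>::nat. real \<Delta> \<le> D * real n / real k \<longrightarrow>
                  of_int (M_kB n (graph_at E (m + \<Delta>) \<omega>) k B) > \<alpha> / (2 * B) * exp (- 2 * l * B * D) * n))}
         \<ge> 1 - 1 / real n"
proof -
  interpret vertex_rule M F n l v E by unfold_locales (fact assms(2))
  consider "n = 0" | "n = 1" | "n \<ge> 2" by linarith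
  then show ?thesis
  proof cases
    case 1
    obtain \<omega> where "\<omega> \<in> space M" using not_empty by blast
    hence "v 1 \<omega> \<in> vertex_tuples 0 l" using v_in_vertex_tuples[of 1 \<omega>] 1 by simp
    thus ?thesis using assms(1) by (auto simp: vertex_tuples_def)
  next
    case 2
    thus ?thesis by simp
  next
    case 3
    interpret midsize_persistence M F n l v E \<alpha> D B
      using 3 assms by unfold_locales auto
    show ?thesis
      using prob_midsize_persists_ge unfolding admissible_def threshold_def by simp
  qed
qed

end
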